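(* Let $p,q\geq 2$ be relatively prime integers, let $c,c'\in A_{pq}^{\mathbb{Z}}$ and $k>0$. If $\mathrm{tr}_{p,q}(c,k)(i)=\mathrm{tr}_{p,q}(c',k)(i)$ for all $-(k-1)\leq i\leq k-1$, then $c(j)=c'(j)$ for all $1\leq j\leq k$.
   Context: For an integer $n>1$, $A_n=\{0,1,\dots,n-1\}$. For relatively prime integers $p,q\geq2$ define $g_{p,q}:A_{pq}\times A_{pq}\to A_{pq}$ by writing $x=x_1q+x_0$, $y=y_1q+y_0$ with $x_0,y_0\in A_q$, $x_1,y_1\in A_p$ (uniquely), and setting $g_{p,q}(x,y)=x_0p+y_1$. Define $F_{p,q}:A_{pq}^{\mathbb{Z}}\to A_{pq}^{\mathbb{Z}}$ by $F_{p,q}(c)(i)=g_{p,q}\big(g_{p,q}(c(i-1),c(i)),\,g_{p,q}(c(i),c(i+1))\big)$. The map $F_{p,q}$ is a bijection with inverse $F_{q,p}$ (same formulas with $p,q$ exchanged), so $F_{p,q}^n$ is defined for all $n\in\mathbb{Z}$. The $k$-trace of $c$ is the sequence $\mathrm{tr}_{p,q}(c,k)=(F_{p,q}^n(c)(k))_{n\in\mathbb{Z}}$. *)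

theory Defs
  imports Main
begin

text \<open>Configurations in A_{pq}^Z are modelled as functions int => nat whose values
are all < p*q.  For x = x1*q + x0 with x0 < q, x0 = x mod q and x1 = x div q.\<close>

definition g :: "nat \<Rightarrow> nat \<Rightarrow> nat \<Rightarrow> nat \<Rightarrow> nat" where
  "g p q x y = (x mod q) * p + y div q"

definition F :: "nat \<Rightarrow> nat \<Rightarrow> (int \<Rightarrow> nat) \<Rightarrow> (int \<Rightarrow> nat)" where
  "F p q c = (\<lambda>i. g p q (g p q (c (i - 1)) (c i)) (g p q (c i) (c (i + 1))))"

text \<open>Integer powers: negative powers use the inverse F q p.\<close>
definition Fpow :: "nat \<Rightarrow> nat \<Rightarrow> int \<Rightarrow> (int \<Rightarrow> nat) \<Rightarrow> (int \<Rightarrow> nat)" where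
  "Fpow p q n c = (if 0 \<le> n then (F p q ^^ nat n) c else (F q p ^^ nat (- n)) c)"

definition config :: "nat \<Rightarrow> (int \<Rightarrow> nat) \<Rightarrow> bool" where
  "config m c \<longleftrightarrow> (\<forall>i. c i < m)"

definition tr :: "nat \<Rightarrow> nat \<Rightarrow> (int \<Rightarrow> nat) \<Rightarrow> int \<Rightarrow> (int \<Rightarrow> nat)" where
  "tr p q c k = (\<lambda>n. Fpow p q n c k)"

end

theory Submission
  imports Defs "HOL-Number_Theory.Cong"
begin

text \<open>The value of \<open>F\<close> at cell \<open>k\<close> remembers \<open>c (k - 1)\<close> modulo \<open>q\<close>
  and that of \<open>F\<^sup>-\<^sup>1 = F q p\<close> remembers it modulo \<open>p\<close>, both up to data read off \<open>c k\<close>.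
  So if two configurations agree at cell \<open>k\<close> at the times \<open>n - 1, n, n + 1\<close>, the Chinese remainder
  theorem makes them agree at cell \<open>k - 1\<close> at time \<open>n\<close>. Applied to the whole time window, the
  trace at \<open>k\<close> over \<open>|n| \<le> k - 1\<close> yields the trace at \<open>k - 1\<close> over \<open>|n| \<le> k - 2\<close>; iterating down
  to time \<open>0\<close> recovers \<open>c k, c (k - 1), \<dots>, c 1\<close>.\<close>

lemma g_less:
  assumes "0 < p" "0 < q" "y < p * q"
  shows "g p q x y < p * q"
proof -
  have "y div q < p" using assms by (simp add: div_less_iff_less_mult mult.commute)
  moreover have "x mod q < q" using \<open>0 < q\<close> by simp
  ultimately have "(x mod q) * p + y div q < (x mod q + 1) * p" by simp
  also have "\<dots> \<le> q * p" using \<open>x mod q < q\<close> by (intro mult_right_mono) auto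
  finally show ?thesis unfolding g_def by (simp add: mult.commute)
qed

lemma
  assumes "0 < p" "0 < q" "y < p * q"
  shows g_mod: "g p q x y mod p = y div q"
    and g_div: "g p q x y div p = x mod q"
proof -
  have "y div q < p" using assms by (simp add: div_less_iff_less_mult mult.commute)
  then show "g p q x y mod p = y div q" "g p q x y div p = x mod q"
    unfolding g_def using assms by auto
qed

lemma g_inverse:
  assumes "0 < p" "0 < q" "y < p * q" "z < p * q"
  shows "g q p (g p q x y) (g p q y z) = y"
  using assms by (simp add: g_def[of q p] g_mod g_div)

lemma config_F:
  assumes "0 < p" "0 < q" "config (p * q) c"
  shows "config (p * q) (F p q c)"
  using assms unfolding config_def F_def by (auto intro!: g_less)

lemma config_funpow_F:
  assumes "0 < p" "0 < q" "config (p * q) c"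
  shows "config (p * q) ((F p q ^^ n) c)"
  by (induction n) (simp_all add: assms config_F)

lemma F_inverse:
  assumes "0 < p" "0 < q" "config (p * q) c"
  shows "F q p (F p q c) = c"
proof
  fix i
  define G where "G j = g p q (c j) (c (j + 1))" for j
  have G_less: "G j < p * q" for j
    using assms unfolding G_def config_def by (auto intro!: g_less)
  have F_G: "F p q c j = g p q (G (j - 1)) (G j)" for j
    unfolding F_def G_def by simp
  have "g q p (F p q c (i - 1)) (F p q c i) = G (i - 1)"
    unfolding F_G using g_inverse[OF assms(1,2) G_less G_less] by simp
  moreover have "g q p (F p q c i) (F p q c (i + 1)) = G i"
    unfolding F_G using g_inverse[OF assms(1,2) G_less G_less] by simp
  moreover have "g q p (G (i - 1)) (G i) = c i"
    unfolding G_def using g_inverse[OF assms(1,2)] assms(3) unfolding config_def by simp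
  ultimately show "F q p (F p q c) i = c i"
    unfolding F_def[of q p] by simp
qed

lemma config_Fpow:
  assumes "0 < p" "0 < q" "config (p * q) c"
  shows "config (p * q) (Fpow p q n c)"
  using assms config_funpow_F[of q p c] config_funpow_F[of p q c]
  unfolding Fpow_def by (simp add: mult.commute)

lemma Fpow_0 [simp]: "Fpow p q 0 c = c"
  unfolding Fpow_def by simp

lemma Fpow_nonpos:
  "n \<le> 0 \<Longrightarrow> Fpow p q n c = (F q p ^^ nat (- n)) c"
  unfolding Fpow_def by (cases "n = 0") auto

lemma Fpow_succ:
  assumes "0 < p" "0 < q" "config (p * q) c"
  shows "Fpow p q (n + 1) c = F p q (Fpow p q n c)"
proof (cases "0 \<le> n")
  case True
  then have "nat (n + 1) = Suc (nat n)" by simp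
  with True show ?thesis unfolding Fpow_def by simp
next
  case False
  have "config (q * p) ((F q p ^^ m) c)" for m
    using config_funpow_F[of q p c] assms by (simp add: mult.commute)
  moreover from False have "nat (- n) = Suc (nat (- (n + 1)))" by simp
  ultimately show ?thesis
    using False F_inverse[OF assms(2,1)] by (simp add: Fpow_nonpos)
qed

lemma Fpow_pred:
  assumes "0 < p" "0 < q" "config (p * q) c"
  shows "Fpow p q (n - 1) c = F q p (Fpow p q n c)"
  using Fpow_succ[OF assms, of "n - 1"] F_inverse[OF assms(1,2) config_Fpow[OF assms]] by simp

lemma F_determines_left_neighbour_mod:
  assumes "0 < p" "0 < q" "coprime p q" "config (p * q) d" "config (p * q) d'"
    and "d k = d' k" "F p q d k = F p q d' k"
  shows "d (k - 1) mod q = d' (k - 1) mod q"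
proof -
  have "g p q (d k) (d (k + 1)) < p * q" "g p q (d' k) (d' (k + 1)) < p * q"
    using assms unfolding config_def by (auto intro!: g_less)
  then have "F p q d k div p = g p q (d (k - 1)) (d k) mod q"
    "F p q d' k div p = g p q (d' (k - 1)) (d' k) mod q"
    unfolding F_def using g_div[OF assms(1,2)] by simp_all
  with assms(6,7) have
    "[(d (k - 1) mod q) * p + d k div q = (d' (k - 1) mod q) * p + d k div q] (mod q)"
    unfolding g_def cong_def by simp
  then have "[(d (k - 1) mod q) * p = (d' (k - 1) mod q) * p] (mod q)"
    by (simp add: cong_add_rcancel_nat)
  then have "[d (k - 1) mod q = d' (k - 1) mod q] (mod q)"
    using cong_mult_rcancel_nat assms(3) by blast
  then show ?thesis unfolding cong_def by simp
qed

lemma F_and_inverse_determine_left_neighbour: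
  assumes "0 < p" "0 < q" "coprime p q" "config (p * q) d" "config (p * q) d'"
    and "d k = d' k" "F p q d k = F p q d' k" "F q p d k = F q p d' k"
  shows "d (k - 1) = d' (k - 1)"
proof -
  have "d (k - 1) mod q = d' (k - 1) mod q"
    using F_determines_left_neighbour_mod assms by blast
  moreover have "d (k - 1) mod p = d' (k - 1) mod p"
    using F_determines_left_neighbour_mod[of q p d d' k] assms
    by (simp add: mult.commute coprime_commute)
  ultimately have "[d (k - 1) = d' (k - 1)] (mod p * q)"
    using coprime_cong_mult_nat assms(3) unfolding cong_def by blast
  then show ?thesis
    using cong_less_modulus_unique_nat assms(4,5) unfolding config_def by blast
qed

lemma tr_window_shift:
  assumes "0 < p" "0 < q" "coprime p q" "config (p * q) c" "config (p * q) c'"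
    and "\<forall>i. - k \<le> i \<and> i \<le> k \<longrightarrow> tr p q c (k + 1) i = tr p q c' (k + 1) i"
  shows "\<forall>i. - (k - 1) \<le> i \<and> i \<le> k - 1 \<longrightarrow> tr p q c k i = tr p q c' k i"
proof (intro allI impI)
  fix i
  assume "- (k - 1) \<le> i \<and> i \<le> k - 1"
  then have "tr p q c (k + 1) n = tr p q c' (k + 1) n" if "n \<in> {i - 1, i, i + 1}" for n
    using assms(6) that by auto
  from this[of "i - 1"] this[of i] this[of "i + 1"] show "tr p q c k i = tr p q c' k i"
    unfolding tr_def
    using F_and_inverse_determine_left_neighbour[OF assms(1-3)
        config_Fpow[OF assms(1,2,4)] config_Fpow[OF assms(1,2,5)], of i "k + 1"]
      Fpow_succ[OF assms(1,2,4), of i] Fpow_succ[OF assms(1,2,5), of i]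
      Fpow_pred[OF assms(1,2,4), of i] Fpow_pred[OF assms(1,2,5), of i]
    by simp
qed

lemma tr_window_determines_config:
  assumes "0 < p" "0 < q" "coprime p q" "config (p * q) c" "config (p * q) c'" "0 \<le> k"
    and "\<forall>i. - (k - 1) \<le> i \<and> i \<le> k - 1 \<longrightarrow> tr p q c k i = tr p q c' k i"
  shows "\<forall>j. 1 \<le> j \<and> j \<le> k \<longrightarrow> c j = c' j"
  using assms(6,7)
proof (induction k rule: int_ge_induct)
  case base
  then show ?case by simp
next
  case (step k)
  have "tr p q c (k + 1) 0 = tr p q c' (k + 1) 0"
    using step.prems step.hyps by simp
  then have "c (k + 1) = c' (k + 1)"
    unfolding tr_def by simp
  moreover have "\<forall>j. 1 \<le> j \<and> j \<le> k \<longrightarrow> c j = c' j"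
    using step.IH tr_window_shift[OF assms(1-5)] step.prems by simp
  ultimately show ?case
    by (auto simp: order_le_less zle_add1_eq_le)
qed

theorem corollary1:
  fixes p q :: nat and c c' :: "int \<Rightarrow> nat" and k :: int
  assumes "p \<ge> 2" and "q \<ge> 2" and "coprime p q"
    and "config (p * q) c" and "config (p * q) c'"
    and "k > 0"
    and "\<forall>i. - (k - 1) \<le> i \<and> i \<le> k - 1 \<longrightarrow> tr p q c k i = tr p q c' k i"
  shows "\<forall>j. 1 \<le> j \<and> j \<le> k \<longrightarrow> c j = c' j"
  using tr_window_determines_config[of p q c c' k] assms by simp

end
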